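(* Let $\Gamma$ be a splice diagram satisfying the edge determinant condition. Then for all nodes $u,v,w$ of $\Gamma$ we have $\ell_{u,v}\,\ell_{u,w}\leq d_u\,\ell_{v,w}$, with equality if and only if $u$ lies on the geodesic $[v,w]$.
   Context: A splice diagram is a finite tree $\Gamma$ with at least one vertex of valency $\geq3$ and no vertex of valency $2$; vertices of valency $1$ are leaves, the others nodes. For each node $v$ and edge $e$ adjacent to $v$ a positive integer weight $d_{v,e}$ is given; $d_{v,u}:=d_{v,e}$ for $e$ the edge at $v$ on the geodesic $[v,u]$. The total weight of a node is $d_v=\prod_{e\ni v}d_{v,e}$. For distinct vertices $u,v$, $\ell_{u,v}$ is the product of all weights $d_{w,e}$ with $w$ a node on $[u,v]$ and $e$ an edge at $w$ not contained in $[u,v]$; $\ell_{v,v}:=d_v$. Edge determinant condition: $d_{u,v}d_{v,u}>\ell_{u,v}$ for each edge $[u,v]$ between two nodes. *)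

theory Defs
  imports Main
begin

text \<open>A finite graph is given by a vertex set V and an adjacency relation E.
  Edges at a vertex v are identified with the neighbours of v.\<close>

definition nbrs :: "'a set \<Rightarrow> ('a \<Rightarrow> 'a \<Rightarrow> bool) \<Rightarrow> 'a \<Rightarrow> 'a set" where
  "nbrs V E v = {w \<in> V. E v w}"

definition valency :: "'a set \<Rightarrow> ('a \<Rightarrow> 'a \<Rightarrow> bool) \<Rightarrow> 'a \<Rightarrow> nat" where
  "valency V E v = card (nbrs V E v)"

definition simple_path :: "'a set \<Rightarrow> ('a \<Rightarrow> 'a \<Rightarrow> bool) \<Rightarrow> 'a list \<Rightarrow> 'a \<Rightarrow> 'a \<Rightarrow> bool" where
  "simple_path V E p u v \<longleftrightarrow> p \<noteq> [] \<and> hd p = u \<and> last p = v \<and> distinct p \<and>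
     set p \<subseteq> V \<and> (\<forall>i. Suc i < length p \<longrightarrow> E (p ! i) (p ! Suc i))"

definition is_tree :: "'a set \<Rightarrow> ('a \<Rightarrow> 'a \<Rightarrow> bool) \<Rightarrow> bool" where
  "is_tree V E \<longleftrightarrow> finite V \<and> V \<noteq> {} \<and>
     (\<forall>x y. E x y \<longrightarrow> x \<in> V \<and> y \<in> V) \<and> (\<forall>x y. E x y \<longrightarrow> E y x) \<and> (\<forall>x. \<not> E x x) \<and>
     (\<forall>u\<in>V. \<forall>v\<in>V. \<exists>!p. simple_path V E p u v)"

definition geod :: "'a set \<Rightarrow> ('a \<Rightarrow> 'a \<Rightarrow> bool) \<Rightarrow> 'a \<Rightarrow> 'a \<Rightarrow> 'a list" where
  "geod V E u v = (THE p. simple_path V E p u v)"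

definition is_node :: "'a set \<Rightarrow> ('a \<Rightarrow> 'a \<Rightarrow> bool) \<Rightarrow> 'a \<Rightarrow> bool" where
  "is_node V E v \<longleftrightarrow> v \<in> V \<and> valency V E v \<noteq> 1"

definition is_leaf :: "'a set \<Rightarrow> ('a \<Rightarrow> 'a \<Rightarrow> bool) \<Rightarrow> 'a \<Rightarrow> bool" where
  "is_leaf V E v \<longleftrightarrow> v \<in> V \<and> valency V E v = 1"

text \<open>Splice diagram: weights d v w (weight at node v of the edge towards neighbour w)
  are positive integers.\<close>
definition splice_diagram :: "'a set \<Rightarrow> ('a \<Rightarrow> 'a \<Rightarrow> bool) \<Rightarrow> ('a \<Rightarrow> 'a \<Rightarrow> nat) \<Rightarrow> bool" where
  "splice_diagram V E d \<longleftrightarrow> is_tree V E \<and> (\<exists>v\<in>V. valency V E v \<ge> 3) \<and>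
     (\<forall>v\<in>V. valency V E v \<noteq> 2) \<and>
     (\<forall>v w. is_node V E v \<longrightarrow> w \<in> nbrs V E v \<longrightarrow> d v w > 0)"

text \<open>d_{v,u}: weight at v of the edge at v on the geodesic [v,u] (u \<noteq> v).\<close>
definition dw :: "'a set \<Rightarrow> ('a \<Rightarrow> 'a \<Rightarrow> bool) \<Rightarrow> ('a \<Rightarrow> 'a \<Rightarrow> nat) \<Rightarrow> 'a \<Rightarrow> 'a \<Rightarrow> nat" where
  "dw V E d v u = d v (geod V E v u ! 1)"

definition total_weight :: "'a set \<Rightarrow> ('a \<Rightarrow> 'a \<Rightarrow> bool) \<Rightarrow> ('a \<Rightarrow> 'a \<Rightarrow> nat) \<Rightarrow> 'a \<Rightarrow> nat" where
  "total_weight V E d v = (\<Prod>w\<in>nbrs V E v. d v w)"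

text \<open>l_{u,v}: product of the weights d w x, w a node on [u,v], x a neighbour of w
  such that the edge [w,x] is not contained in [u,v]; l_{v,v} = d_v.\<close>
definition ell :: "'a set \<Rightarrow> ('a \<Rightarrow> 'a \<Rightarrow> bool) \<Rightarrow> ('a \<Rightarrow> 'a \<Rightarrow> nat) \<Rightarrow> 'a \<Rightarrow> 'a \<Rightarrow> nat" where
  "ell V E d u v = (if u = v then total_weight V E d v else
     (\<Prod>(w, x)\<in>(SIGMA w:{w \<in> set (geod V E u v). is_node V E w}.
          {x \<in> nbrs V E w. \<not> (\<exists>i. Suc i < length (geod V E u v) \<and>
             {geod V E u v ! i, geod V E u v ! Suc i} = {w, x})}). d w x))"

definition edge_determinant_condition :: "'a set \<Rightarrow> ('a \<Rightarrow> 'a \<Rightarrow> bool) \<Rightarrow> ('a \<Rightarrow> 'a \<Rightarrow> nat) \<Rightarrow> bool" where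
  "edge_determinant_condition V E d \<longleftrightarrow>
     (\<forall>u v. is_node V E u \<longrightarrow> is_node V E v \<longrightarrow> E u v \<longrightarrow>
        dw V E d u v * dw V E d v u > ell V E d u v)"

end

theory Submission
  imports Defs
begin

(* For nodes x, y every vertex of the geodesic [x,y] is a node, and l(x,y) times the product
   of d(a,b) d(b,a) over the edges [a,b] of [x,y] is the product of the total weights of the
   vertices of [x,y].  Hence l(x,y) d(c) = l(x,c) l(c,y) for every c on [x,y], and the edge
   determinant condition l(a,b)^2 < d(a) d(b) for adjacent nodes propagates along geodesics to
   l(x,y)^2 < d(x) d(y) for all distinct nodes x, y.

   Let c be the vertex where [u,v] and [u,w] separate; it lies on [v,w], and c = u exactly
   when u lies on [v,w].  Splitting the three geodesics at c gives
     l(u,v) l(u,w) d(c)^2 = l(u,c)^2 l(c,v) l(c,w),   d(u) l(v,w) d(c)^2 = d(u) d(c) l(c,v) l(c,w),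
   so the claim reduces to l(u,c)^2 <= d(u) d(c), with equality iff u = c. *)

fun edge_prod :: "('a \<Rightarrow> 'a \<Rightarrow> 'b::comm_monoid_mult) \<Rightarrow> 'a list \<Rightarrow> 'b" where
  "edge_prod d (x # y # r) = d x y * d y x * edge_prod d (y # r)"
| "edge_prod d _ = 1"

lemma edge_prod_append_tl:
  "a \<noteq> [] \<Longrightarrow> last a = hd b \<Longrightarrow> edge_prod d (a @ tl b) = edge_prod d a * edge_prod d b"
proof (induction d a rule: edge_prod.induct)
  case ("2_2" d x)
  then show ?case by (cases b) auto
qed (simp_all add: mult.assoc)

lemma edge_prod_rev: "edge_prod d (rev p) = edge_prod d p"
proof (induction d p rule: edge_prod.induct)
  case (1 d x y r)
  have "edge_prod d (rev (x # y # r)) = edge_prod d (rev (y # r) @ tl [y, x])" by simp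
  also have "\<dots> = edge_prod d (rev (y # r)) * edge_prod d [y, x]"
    by (rule edge_prod_append_tl) auto
  finally show ?case using 1 by (simp add: mult.commute)
qed auto

lemma edge_prod_pos:
  fixes d :: "'a \<Rightarrow> 'a \<Rightarrow> 'b::linordered_semidom"
  shows "successively (\<lambda>a b. 0 < d a b \<and> 0 < d b a) p \<Longrightarrow> 0 < edge_prod d p"
  by (induction d p rule: edge_prod.induct) auto

definition path_arcs :: "'a list \<Rightarrow> ('a \<times> 'a) set" where
  "path_arcs p = {(a, b). \<exists>i. Suc i < length p \<and> {p ! i, p ! Suc i} = {a, b}}"

lemma path_arcs_subset: "path_arcs p \<subseteq> set p \<times> set p"
  unfolding path_arcs_def by (auto simp: doubleton_eq_iff)

lemma path_arcs_Cons_Cons: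
  "path_arcs (x # y # r) = insert (x, y) (insert (y, x) (path_arcs (y # r)))"
proof -
  have ex_Suc: "(\<exists>i. Suc i < Suc n \<and> Q i) \<longleftrightarrow> (0 < n \<and> Q 0) \<or> (\<exists>i. Suc i < n \<and> Q (Suc i))"
    for n and Q :: "nat \<Rightarrow> bool"
    by (metis Suc_less_SucD Suc_less_eq not0_implies_Suc zero_less_Suc)
  show ?thesis
    unfolding path_arcs_def
    by (simp only: length_Cons ex_Suc) (auto simp: doubleton_eq_iff)
qed

lemma prod_path_arcs: "distinct p \<Longrightarrow> (\<Prod>(a, b)\<in>path_arcs p. d a b) = edge_prod d p"
proof (induction d p rule: edge_prod.induct)
  case (1 d x y r)
  have "(x, y) \<notin> path_arcs (y # r)" "(y, x) \<notin> path_arcs (y # r)"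
    using path_arcs_subset[of "y # r"] 1(2) by auto
  moreover have "finite (path_arcs (y # r))"
    using path_arcs_subset[of "y # r"] finite_subset by blast
  ultimately show ?case using 1 by (simp add: path_arcs_Cons_Cons mult.assoc)
qed (simp_all add: path_arcs_def)

lemma simple_path_iff_successively:
  "simple_path V E p u v \<longleftrightarrow>
     p \<noteq> [] \<and> hd p = u \<and> last p = v \<and> distinct p \<and> set p \<subseteq> V \<and> successively E p"
  unfolding simple_path_def successively_conv_nth by simp

lemma simple_path_take:
  assumes "simple_path V E p x y" "i < length p"
  shows "simple_path V E (take (Suc i) p) x (p ! i)"
proof -
  have "successively E (take (Suc i) p)"
    using assms(1) unfolding simple_path_iff_successively successively_conv_nth by simp
  moreover have "last (take (Suc i) p) = p ! i"
    using assms(2) by (simp add: take_Suc_conv_app_nth)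
  ultimately show ?thesis
    using assms set_take_subset[of "Suc i" p]
    unfolding simple_path_iff_successively by auto
qed

lemma simple_path_drop:
  assumes "simple_path V E p x y" "i < length p"
  shows "simple_path V E (drop i p) (p ! i) y"
  using assms unfolding simple_path_iff_successively
  by (auto simp: successively_conv_nth hd_drop_conv_nth dest: in_set_dropD)

locale tree =
  fixes V :: "'a set" and E :: "'a \<Rightarrow> 'a \<Rightarrow> bool"
  assumes is_tree: "is_tree V E"
begin

lemma adjacent_sym: "E a b \<Longrightarrow> E b a"
  using is_tree unfolding is_tree_def by blast

lemma simple_path_rev: "simple_path V E p x y \<Longrightarrow> simple_path V E (rev p) y x"
  unfolding simple_path_iff_successively
  by (auto simp: hd_rev last_rev adjacent_sym elim!: successively_mono)

lemma simple_path_join: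
  assumes b: "simple_path V E b c v" and b': "simple_path V E b' c w"
    and disj: "set b \<inter> set b' \<subseteq> {c}"
  shows "simple_path V E (rev b @ tl b') v w"
proof -
  obtain s where bs: "b = c # s" using b unfolding simple_path_def by (cases b) auto
  obtain t where bt: "b' = c # t" using b' unfolding simple_path_def by (cases b') auto
  have s: "successively E (c # s)" "distinct (c # s)" "last (c # s) = v" "set (c # s) \<subseteq> V"
    using b bs unfolding simple_path_iff_successively by auto
  have t: "successively E (c # t)" "distinct (c # t)" "last (c # t) = w" "set (c # t) \<subseteq> V"
    using b' bt unfolding simple_path_iff_successively by auto
  have "successively E (rev s @ [c])"
    using simple_path_rev[OF b] bs unfolding simple_path_iff_successively by simp
  then have "successively E (rev s @ c # t)"
    using t(1) by (auto simp: successively_append_iff)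
  moreover have "hd (rev s @ c # t) = v"
    using s(3) by (cases "s = []") (auto simp: hd_rev)
  moreover have "set s \<inter> set t = {}" using disj bs bt s(2) by auto
  ultimately show ?thesis
    unfolding bs bt simple_path_iff_successively using s t by auto
qed

lemma unique_simple_path: "x \<in> V \<Longrightarrow> y \<in> V \<Longrightarrow> \<exists>!p. simple_path V E p x y"
  using is_tree unfolding is_tree_def by blast

lemma simple_path_geod: "x \<in> V \<Longrightarrow> y \<in> V \<Longrightarrow> simple_path V E (geod V E x y) x y"
  unfolding geod_def by (rule theI'[OF unique_simple_path])

lemma geod_eqI:
  assumes "simple_path V E p x y"
  shows "geod V E x y = p"
proof -
  have "x \<in> V" "y \<in> V"
    using assms hd_in_set last_in_set unfolding simple_path_def by blast+
  then show ?thesis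
    unfolding geod_def using assms by (rule the1_equality[OF unique_simple_path])
qed

lemma geod_same: "x \<in> V \<Longrightarrow> geod V E x x = [x]"
  by (rule geod_eqI) (auto simp: simple_path_def)

lemma geod_adjacent: "E x y \<Longrightarrow> geod V E x y = [x, y]"
  by (rule geod_eqI) (use is_tree in \<open>auto simp: is_tree_def simple_path_iff_successively\<close>)

lemma geod_rev: "x \<in> V \<Longrightarrow> y \<in> V \<Longrightarrow> geod V E y x = rev (geod V E x y)"
  by (rule geod_eqI[OF simple_path_rev[OF simple_path_geod]])

lemma geod_split:
  assumes "x \<in> V" "y \<in> V" "c \<in> set (geod V E x y)"
  shows "geod V E x y = geod V E x c @ tl (geod V E c y)"
proof -
  define p where "p = geod V E x y"
  obtain i where i: "i < length p" "p ! i = c"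
    using assms(3) unfolding p_def[symmetric] by (auto simp: in_set_conv_nth)
  have p: "simple_path V E p x y" unfolding p_def by (rule simple_path_geod[OF assms(1,2)])
  have "geod V E x c = take (Suc i) p"
    using geod_eqI[OF simple_path_take[OF p i(1)]] i(2) by simp
  moreover have "geod V E c y = drop i p"
    using geod_eqI[OF simple_path_drop[OF p i(1)]] i(2) by simp
  ultimately show ?thesis
    using i(1) unfolding p_def[symmetric]
    by (metis Cons_nth_drop_Suc append_take_drop_id list.sel(3))
qed

lemma geod_Cons: "x \<in> V \<Longrightarrow> y \<in> V \<Longrightarrow> geod V E x y = x # tl (geod V E x y)"
  using simple_path_geod unfolding simple_path_def by (metis list.collapse)

lemma set_geod_subset:
  assumes "x \<in> V" "y \<in> V" "c \<in> set (geod V E x y)"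
  shows "set (geod V E c y) \<subseteq> set (geod V E x y)"
proof -
  have "c \<in> V" using simple_path_geod[OF assms(1,2)] assms(3) unfolding simple_path_def by blast
  then show ?thesis
    using geod_split[OF assms] geod_Cons[OF _ assms(2)] assms(3)
    by (metis set_ConsD set_append subsetI UnI2)
qed

lemma is_node_geod:
  assumes "is_node V E x" "is_node V E y" "z \<in> set (geod V E x y)"
  shows "is_node V E z"
proof -
  define p where "p = geod V E x y"
  have p: "simple_path V E p x y"
    unfolding p_def using assms(1,2) by (intro simple_path_geod) (auto simp: is_node_def)
  obtain i where i: "i < length p" "p ! i = z"
    using assms(3) unfolding p_def[symmetric] by (auto simp: in_set_conv_nth)
  consider "i = 0" | "Suc i = length p" | j where "i = Suc j" "Suc i < length p"
    using i(1) by (metis Suc_lessI not0_implies_Suc)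
  then show ?thesis
  proof cases
    case 1
    then show ?thesis using assms(1) p i unfolding simple_path_def by (metis hd_conv_nth)
  next
    case 2
    then show ?thesis using assms(2) p i unfolding simple_path_def by (metis diff_Suc_1 last_conv_nth)
  next
    case (3 j)
    have "E z (p ! j)" "E z (p ! Suc i)"
      using p 3 i adjacent_sym unfolding simple_path_def by auto
    moreover have "p ! j \<noteq> p ! Suc i"
      using p 3 unfolding simple_path_def by (simp add: nth_eq_iff_index_eq)
    moreover have "p ! j \<in> V" "p ! Suc i \<in> V"
      using p 3 unfolding simple_path_def by auto
    ultimately have "card {p ! j, p ! Suc i} \<le> valency V E z"
      using is_tree unfolding valency_def nbrs_def is_tree_def by (intro card_mono) auto
    then have "2 \<le> valency V E z"
      using \<open>p ! j \<noteq> p ! Suc i\<close> by simp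
    then show ?thesis
      using p i unfolding is_node_def simple_path_def by auto
  qed
qed

lemma geod_median:
  assumes "u \<in> V" "v \<in> V" "w \<in> V"
  obtains c where "c \<in> set (geod V E u v)" "c \<in> set (geod V E u w)" "c \<in> set (geod V E v w)"
    and "u \<in> set (geod V E v w) \<longleftrightarrow> u = c"
proof -
  define p where "p = geod V E u v"
  define q where "q = geod V E u w"
  have p: "simple_path V E p u v" unfolding p_def by (rule simple_path_geod[OF assms(1,2)])
  have q: "simple_path V E q u w" unfolding q_def by (rule simple_path_geod[OF assms(1,3)])
  \<comment> \<open>c is the last vertex of [u,v] that lies on [u,w]\<close>
  define J where "J = {j. j < length p \<and> p ! j \<in> set q}"
  have "0 \<in> J"
    using p q unfolding J_def simple_path_def
    by (metis hd_conv_nth hd_in_set length_greater_0_conv mem_Collect_eq)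
  moreover have "finite J" unfolding J_def by simp
  ultimately have j: "Max J \<in> J" "\<And>m. m \<in> J \<Longrightarrow> m \<le> Max J"
    by (auto intro: Max_in)
  define c where "c = p ! Max J"
  have c: "c \<in> set p" "c \<in> set q" using j(1) unfolding c_def J_def by auto
  have cv: "geod V E c v = drop (Max J) p"
    using geod_eqI[OF simple_path_drop[OF p]] j(1) unfolding c_def J_def by simp
  have disj: "set (geod V E c v) \<inter> set (geod V E c w) \<subseteq> {c}"
  proof
    fix z assume z: "z \<in> set (geod V E c v) \<inter> set (geod V E c w)"
    obtain n where "n < length (drop (Max J) p)" "drop (Max J) p ! n = z"
      using z unfolding cv by (metis IntD1 in_set_conv_nth)
    then have n: "Max J + n < length p" "p ! (Max J + n) = z" by auto
    have "z \<in> set q"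
      using z set_geod_subset[OF assms(1,3)] c(2) unfolding q_def by blast
    then have "Max J + n \<in> J" using n unfolding J_def by simp
    then show "z \<in> {c}" using j(2) n unfolding c_def by fastforce
  qed
  have cV: "c \<in> V" using p c(1) unfolding simple_path_def by blast
  have vw: "geod V E v w = rev (geod V E c v) @ tl (geod V E c w)"
    by (rule geod_eqI[OF simple_path_join[OF simple_path_geod simple_path_geod disj]])
      (use cV assms in auto)
  have u_notin_tl: "u \<notin> set (tl (geod V E c y))" if "y \<in> V" "c \<in> set (geod V E u y)" for y
  proof -
    have "distinct (geod V E u c @ tl (geod V E c y))"
      using simple_path_geod[OF assms(1) that(1)] geod_split[OF assms(1) that]
      unfolding simple_path_def by metis
    moreover have "u \<in> set (geod V E u c)"
      using geod_Cons[OF assms(1) cV] by (metis list.set_intros(1))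
    ultimately show ?thesis by auto
  qed
  have "set (geod V E c v) = insert c (set (tl (geod V E c v)))"
    using geod_Cons[OF cV assms(2)] by (metis list.simps(15))
  then have "set (geod V E v w) = insert c (set (tl (geod V E c v)) \<union> set (tl (geod V E c w)))"
    unfolding vw by simp
  moreover have "u \<notin> set (tl (geod V E c v))" "u \<notin> set (tl (geod V E c w))"
    using u_notin_tl[OF assms(2)] u_notin_tl[OF assms(3)] c unfolding p_def q_def by blast+
  ultimately show ?thesis
    using that c unfolding p_def q_def by blast
qed

end

locale splice =
  fixes V :: "'a set" and E :: "'a \<Rightarrow> 'a \<Rightarrow> bool" and d :: "'a \<Rightarrow> 'a \<Rightarrow> nat"
  assumes splice_diagram: "splice_diagram V E d"
begin

sublocale tree V E
  using splice_diagram by unfold_locales (simp add: splice_diagram_def)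

lemma node_in_V: "is_node V E x \<Longrightarrow> x \<in> V"
  by (simp add: is_node_def)

lemma weight_pos: "is_node V E a \<Longrightarrow> E a b \<Longrightarrow> 0 < d a b"
  using splice_diagram is_tree unfolding splice_diagram_def is_tree_def nbrs_def by blast

lemma total_weight_pos: "is_node V E x \<Longrightarrow> 0 < total_weight V E d x"
  using splice_diagram unfolding total_weight_def splice_diagram_def by (intro prod_pos) auto

lemma edge_prod_geod_pos:
  assumes "is_node V E x" "is_node V E y"
  shows "0 < edge_prod d (geod V E x y)"
proof -
  have "successively E (geod V E x y)"
    using simple_path_geod[OF assms[THEN node_in_V]] by (simp add: simple_path_iff_successively)
  then show ?thesis
    by (rule edge_prod_pos[OF successively_mono])
      (use is_node_geod[OF assms] weight_pos adjacent_sym in blast)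
qed

lemma ell_mult_edge_prod:
  assumes "is_node V E x" "is_node V E y"
  shows "ell V E d x y * edge_prod d (geod V E x y) = (\<Prod>z\<leftarrow>geod V E x y. total_weight V E d z)"
proof (cases "x = y")
  case True
  then show ?thesis using geod_same[OF node_in_V[OF assms(1)]] by (simp add: ell_def)
next
  case False
  define p where "p = geod V E x y"
  have p: "simple_path V E p x y"
    unfolding p_def using assms by (intro simple_path_geod node_in_V)
  define S where "S = (SIGMA z:set p. nbrs V E z)"
  have fin: "finite S"
    using is_tree unfolding S_def is_tree_def nbrs_def by auto
  have arcs: "path_arcs p \<subseteq> S"
  proof
    fix a assume "a \<in> path_arcs p"
    then obtain i where "Suc i < length p" "{p ! i, p ! Suc i} = {fst a, snd a}"
      unfolding path_arcs_def by auto
    then show "a \<in> S"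
      using p adjacent_sym unfolding S_def simple_path_def nbrs_def
      by (cases a) (auto simp: doubleton_eq_iff subset_iff)
  qed
  have "ell V E d x y = (\<Prod>(z, z')\<in>S - path_arcs p. d z z')"
  proof -
    have "{z \<in> set p. is_node V E z} = set p"
      using is_node_geod[OF assms] unfolding p_def by blast
    then show ?thesis
      unfolding ell_def S_def path_arcs_def p_def[symmetric] using False
      by (auto intro!: prod.cong)
  qed
  moreover have "edge_prod d p = (\<Prod>(z, z')\<in>path_arcs p. d z z')"
    using p prod_path_arcs unfolding simple_path_def by metis
  moreover have "(\<Prod>z\<leftarrow>p. total_weight V E d z) = (\<Prod>(z, z')\<in>S. d z z')"
    using p is_tree unfolding simple_path_def is_tree_def S_def total_weight_def nbrs_def
    by (simp add: prod.distinct_set_conv_list[symmetric] prod.Sigma)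
  ultimately show ?thesis
    unfolding p_def[symmetric] by (simp add: prod.subset_diff[OF arcs fin])
qed

lemma prod_total_weight_geod_pos:
  assumes "is_node V E x" "is_node V E y"
  shows "0 < (\<Prod>z\<leftarrow>geod V E x y. total_weight V E d z)"
  using is_node_geod[OF assms] total_weight_pos
  by (auto simp: neq0_conv[symmetric] prod_list_zero_iff simp del: neq0_conv)

lemma ell_pos: "is_node V E x \<Longrightarrow> is_node V E y \<Longrightarrow> 0 < ell V E d x y"
  using ell_mult_edge_prod prod_total_weight_geod_pos by (metis mult_eq_0_iff neq0_conv)

lemma ell_sym:
  assumes "is_node V E x" "is_node V E y"
  shows "ell V E d y x = ell V E d x y"
proof -
  have "ell V E d y x * edge_prod d (geod V E x y) = ell V E d x y * edge_prod d (geod V E x y)"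
    using ell_mult_edge_prod[OF assms(2,1)] ell_mult_edge_prod[OF assms]
    by (simp add: geod_rev[OF assms[THEN node_in_V]] edge_prod_rev rev_map[symmetric])
  then show ?thesis using edge_prod_geod_pos[OF assms] by simp
qed

lemma ell_split:
  assumes x: "is_node V E x" and y: "is_node V E y" and c: "c \<in> set (geod V E x y)"
  shows "ell V E d x y * total_weight V E d c = ell V E d x c * ell V E d c y"
proof -
  let ?t = "total_weight V E d" and ?e = "\<lambda>a b. edge_prod d (geod V E a b)"
    and ?P = "\<lambda>a b. \<Prod>z\<leftarrow>geod V E a b. total_weight V E d z"
  have cn: "is_node V E c" by (rule is_node_geod[OF x y c])
  note split = geod_split[OF node_in_V[OF x] node_in_V[OF y] c]
  have xc: "geod V E x c \<noteq> []" "last (geod V E x c) = c"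
    using simple_path_geod[OF node_in_V[OF x] node_in_V[OF cn]] unfolding simple_path_def by auto
  have cy: "geod V E c y = c # tl (geod V E c y)"
    by (rule geod_Cons[OF node_in_V[OF cn] node_in_V[OF y]])
  have e: "?e x y = ?e x c * ?e c y"
    unfolding split using xc cy by (metis edge_prod_append_tl list.sel(1))
  have "?P c y = ?t c * (\<Prod>z\<leftarrow>tl (geod V E c y). ?t z)"
    by (subst cy) simp
  then have P: "?P x y * ?t c = ?P x c * ?P c y"
    unfolding split by (simp add: mult_ac)
  have "(ell V E d x y * ?t c) * (?e x c * ?e c y) = (ell V E d x y * ?e x y) * ?t c"
    by (simp add: e mult_ac)
  also have "\<dots> = ?P x c * ?P c y"
    by (simp add: ell_mult_edge_prod[OF x y] P)
  also have "\<dots> = (ell V E d x c * ell V E d c y) * (?e x c * ?e c y)"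
    by (simp add: ell_mult_edge_prod[OF x cn, symmetric] ell_mult_edge_prod[OF cn y, symmetric]
        mult_ac)
  finally show ?thesis
    using edge_prod_geod_pos[OF x cn] edge_prod_geod_pos[OF cn y] by simp
qed

lemma ell_sq_less_adjacent:
  assumes "edge_determinant_condition V E d" "is_node V E a" "is_node V E b" "E a b"
  shows "(ell V E d a b)\<^sup>2 < total_weight V E d a * total_weight V E d b"
proof -
  have geods: "geod V E a b = [a, b]" "geod V E b a = [b, a]"
    using assms(4) adjacent_sym by (auto intro: geod_adjacent)
  have "dw V E d a b = d a b" "dw V E d b a = d b a"
    unfolding dw_def geods by simp_all
  then have "ell V E d a b < d a b * d b a"
    using assms unfolding edge_determinant_condition_def by metis
  then have "ell V E d a b * ell V E d a b < ell V E d a b * (d a b * d b a)"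
    using ell_pos[OF assms(2,3)] by simp
  also have "\<dots> = total_weight V E d a * total_weight V E d b"
    using ell_mult_edge_prod[OF assms(2,3)] unfolding geods by simp
  finally show ?thesis by (simp add: power2_eq_square)
qed

lemma ell_sq_less:
  assumes ed: "edge_determinant_condition V E d"
    and "is_node V E x" "is_node V E y" "x \<noteq> y"
  shows "(ell V E d x y)\<^sup>2 < total_weight V E d x * total_weight V E d y"
  using assms(2-4)
proof (induction "length (geod V E x y)" arbitrary: x rule: less_induct)
  case less
  let ?t = "total_weight V E d"
  define c where "c = geod V E x y ! 1"
  have p: "simple_path V E (geod V E x y) x y"
    using less.prems by (intro simple_path_geod node_in_V)
  then have "1 < length (geod V E x y)"
    using less.prems(3) unfolding simple_path_def by (metis One_nat_def Suc_lessI hd_conv_nth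
        last_conv_nth length_greater_0_conv diff_Suc_1)
  then have c: "c \<in> set (geod V E x y)" "E x c"
    using p unfolding c_def simple_path_def by (auto simp: hd_conv_nth)
  have cn: "is_node V E c" by (rule is_node_geod[OF less.prems(1,2) c(1)])
  have xc: "(ell V E d x c)\<^sup>2 < ?t x * ?t c"
    by (rule ell_sq_less_adjacent[OF ed less.prems(1) cn c(2)])
  show ?case
  proof (cases "c = y")
    case True
    then show ?thesis using xc by simp
  next
    case False
    have "geod V E x y = x # geod V E c y"
      using geod_split[OF less.prems(1,2)[THEN node_in_V] c(1)] geod_adjacent[OF c(2)]
        geod_Cons[OF node_in_V[OF cn] node_in_V[OF less.prems(2)]] by simp
    then have "(ell V E d c y)\<^sup>2 < ?t c * ?t y"
      using less.hyps[OF _ cn less.prems(2) False] by simp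
    then have "(ell V E d x c)\<^sup>2 * (ell V E d c y)\<^sup>2 < (?t x * ?t c) * (?t c * ?t y)"
      using xc total_weight_pos less.prems(1) cn by (intro mult_strict_mono) auto
    moreover have "(ell V E d x c)\<^sup>2 * (ell V E d c y)\<^sup>2 = (ell V E d x y)\<^sup>2 * (?t c)\<^sup>2"
      unfolding power_mult_distrib[symmetric] ell_split[OF less.prems(1,2) c(1), symmetric] ..
    ultimately have "(ell V E d x y)\<^sup>2 * (?t c)\<^sup>2 < (?t x * ?t y) * (?t c)\<^sup>2"
      by (simp add: power2_eq_square mult_ac)
    then show ?thesis by (metis mult_less_cancel2)
  qed
qed

end

theorem proposition2p10:
  fixes V :: "'a set" and E :: "'a \<Rightarrow> 'a \<Rightarrow> bool" and d :: "'a \<Rightarrow> 'a \<Rightarrow> nat"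
  assumes "splice_diagram V E d"
    and "edge_determinant_condition V E d"
    and "is_node V E u" and "is_node V E v" and "is_node V E w"
  shows "ell V E d u v * ell V E d u w \<le> total_weight V E d u * ell V E d v w
    \<and> (ell V E d u v * ell V E d u w = total_weight V E d u * ell V E d v w
           \<longleftrightarrow> u \<in> set (geod V E v w))"
proof -
  interpret splice V E d by unfold_locales (rule assms(1))
  let ?t = "total_weight V E d" and ?l = "ell V E d"
  obtain c where c: "c \<in> set (geod V E u v)" "c \<in> set (geod V E u w)" "c \<in> set (geod V E v w)"
    and on_geod_iff: "u \<in> set (geod V E v w) \<longleftrightarrow> u = c"
    using geod_median assms(3-5)[THEN node_in_V] by metis
  have cn: "is_node V E c" by (rule is_node_geod[OF assms(4,5) c(3)])
  have "?l u v * ?l u w * (?t c)\<^sup>2 = (?l u c)\<^sup>2 * (?l c v * ?l c w)"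
    using ell_split[OF assms(3,4) c(1)] ell_split[OF assms(3,5) c(2)]
    by (simp add: power2_eq_square mult_ac)
  moreover have "?t u * ?l v w * (?t c)\<^sup>2 = (?t u * ?t c) * (?l c v * ?l c w)"
    using ell_split[OF assms(4,5) c(3)] ell_sym[OF assms(4) cn]
    by (simp add: power2_eq_square mult_ac)
  moreover have "(?l u c)\<^sup>2 \<le> ?t u * ?t c \<and> ((?l u c)\<^sup>2 = ?t u * ?t c \<longleftrightarrow> u = c)"
    using ell_sq_less[OF assms(2,3) cn] by (cases "u = c") (auto simp: ell_def power2_eq_square)
  moreover have "0 < ?l c v * ?l c w" "0 < (?t c)\<^sup>2"
    using ell_pos[OF cn assms(4)] ell_pos[OF cn assms(5)] total_weight_pos[OF cn] by simp_all
  ultimately show ?thesis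
    unfolding on_geod_iff by (metis mult_le_cancel2 mult_cancel2 neq0_conv)
qed

end
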